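(* Let $k_1,k_2$ be positive integers with $k_1\le k_2$ and $k_1+k_2\ge 4$, and let $m$ be a positive integer such that there exists a perfect $B[-k_1,k_2](m)$ set. Suppose $p$ is a prime and $a>0$ an integer with $p\mid m$ and $a\mid p-1$. If $p\mid a(k_1+k_2)+1$ and $\lfloor k_1/p\rfloor+\lfloor k_2/p\rfloor=\lfloor (k_1+k_2)/p\rfloor$, then $a(k_1+k_2)+1\mid m$.
   Context: For a positive integer $q$, $\mathbb{Z}_q$ is the ring of integers modulo $q$. For integers $a\le b$, $[a,b]^\ast=\{a,a+1,\dots,b\}\setminus\{0\}$. For non-negative integers $0\le k_1\le k_2$ and a positive integer $q$, a set $B\subseteq\mathbb{Z}_q$ is a $B[-k_1,k_2](q)$ set (splitter set) if, for each $b\in B$, the set $\{ab \bmod q: a\in[-k_1,k_2]^\ast\}$ consists of $k_1+k_2$ distinct nonzero elements, and these sets are pairwise disjoint for distinct $b\in B$. Such a set is perfect if $|B|=(q-1)/(k_1+k_2)$; equivalently, every nonzero element of $\mathbb{Z}_q$ has a unique representation $ab$ with $a\in[-k_1,k_2]^\ast$, $b\in B$ (and $0$ has no such representation). *)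

theory Defs
  imports Complex_Main "HOL-Computational_Algebra.Primes"
begin

text \<open>Elements of Z_q are represented by integers in {0..<q}.
  The multiplier set [-k1,k2]* = {-k1..k2} minus {0}.\<close>

definition mult_range :: "nat \<Rightarrow> nat \<Rightarrow> int set" where
  "mult_range k1 k2 = {- int k1 .. int k2} - {0}"

definition splitter_row :: "nat \<Rightarrow> nat \<Rightarrow> nat \<Rightarrow> int \<Rightarrow> int set" where
  "splitter_row k1 k2 q b = (\<lambda>a. (a * b) mod int q) ` mult_range k1 k2"

definition splitter_set :: "nat \<Rightarrow> nat \<Rightarrow> nat \<Rightarrow> int set \<Rightarrow> bool" where
  "splitter_set k1 k2 q B \<longleftrightarrow>
     B \<subseteq> {0 ..< int q} \<and>
     (\<forall>b\<in>B. card (splitter_row k1 k2 q b) = k1 + k2 \<and> 0 \<notin> splitter_row k1 k2 q b) \<and>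
     (\<forall>b\<in>B. \<forall>b'\<in>B. b \<noteq> b' \<longrightarrow> splitter_row k1 k2 q b \<inter> splitter_row k1 k2 q b' = {})"

definition perfect_splitter_set :: "nat \<Rightarrow> nat \<Rightarrow> nat \<Rightarrow> int set \<Rightarrow> bool" where
  "perfect_splitter_set k1 k2 q B \<longleftrightarrow>
     splitter_set k1 k2 q B \<and> real (card B) = (real q - 1) / real (k1 + k2)"

end

theory Submission
  imports Defs
begin

text \<open>A perfect splitter set \<open>B\<close> makes \<open>(x, b) \<mapsto> x b mod m\<close> a bijection from
  \<open>[-k\<^sub>1, k\<^sub>2]\<^sup>* \<times> B\<close> onto the nonzero residues mod \<open>m\<close>. As \<open>p\<close> divides \<open>m\<close>, a product is
  prime to \<open>p\<close> iff both factors are, so the bijection restricts to one from \<open>S \<times> B'\<close> onto the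
  residues prime to \<open>p\<close>, where \<open>S\<close> and \<open>B'\<close> consist of the multipliers and elements of \<open>B\<close> prime
  to \<open>p\<close>. Hence
  \<open>|S| |B'| = (p - 1) m/p\<close>, and the floor condition gives \<open>|S| = k - \<lfloor>k/p\<rfloor>\<close> for \<open>k = k\<^sub>1 + k\<^sub>2\<close>.
  Writing \<open>p = ac + 1\<close> and \<open>ak + 1 = pt\<close>, one finds \<open>k - \<lfloor>k/p\<rfloor> = ct\<close>, hence \<open>t |B'| = a m/p\<close>;
  since \<open>t\<close> is prime to \<open>a\<close>, it divides \<open>m/p\<close>.\<close>

lemma card_non_multiples_atLeastAtMost:
  fixes p K :: nat
  shows "card {x \<in> {1..K}. \<not> p dvd x} = K - K div p"
proof (induction K)
  case 0
  then show ?case by simp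
next
  case (Suc K)
  have "{x \<in> {1..Suc K}. \<not> p dvd x} =
      {x \<in> {1..K}. \<not> p dvd x} \<union> (if p dvd Suc K then {} else {Suc K})"
    by (auto simp: le_Suc_eq)
  moreover have "K div p \<le> K" by (rule div_le_dividend)
  ultimately show ?case
    using Suc.IH by (auto simp: div_Suc dvd_eq_mod_eq_0 Suc_diff_le)
qed

lemma card_int_non_multiples_atLeastAtMost:
  fixes p K :: nat
  shows "card {x \<in> {1..int K}. \<not> int p dvd x} = K - K div p"
proof -
  have "{1..int K} = int ` {1..K}" by (simp add: image_int_atLeastAtMost)
  then have "{x \<in> {1..int K}. \<not> int p dvd x} = int ` {x \<in> {1..K}. \<not> p dvd x}"
    by auto
  then have "card {x \<in> {1..int K}. \<not> int p dvd x} = card {x \<in> {1..K}. \<not> p dvd x}"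
    by (simp add: card_image)
  then show ?thesis
    by (simp only: card_non_multiples_atLeastAtMost)
qed

lemma card_mult_range: "card (mult_range k1 k2) = k1 + k2"
  unfolding mult_range_def by (subst card_Diff_singleton) auto

lemma card_mult_range_non_multiples:
  "card {x \<in> mult_range k1 k2. \<not> int p dvd x} = (k1 - k1 div p) + (k2 - k2 div p)"
proof -
  let ?N = "\<lambda>K. {x \<in> {1..int K}. \<not> int p dvd x}"
  have "mult_range k1 k2 = uminus ` {1..int k1} \<union> {1..int k2}"
    unfolding mult_range_def by auto
  then have "{x \<in> mult_range k1 k2. \<not> int p dvd x} =
      {x \<in> uminus ` {1..int k1}. \<not> int p dvd x} \<union> ?N k2"
    by auto
  moreover have "{x \<in> uminus ` A. \<not> int p dvd x} = uminus ` {x \<in> A. \<not> int p dvd x}" for A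
    by auto
  ultimately have "{x \<in> mult_range k1 k2. \<not> int p dvd x} = uminus ` ?N k1 \<union> ?N k2"
    by (simp only:)
  moreover have "uminus ` ?N k1 \<inter> ?N k2 = {}" by auto
  then have "card (uminus ` ?N k1 \<union> ?N k2) = card (uminus ` ?N k1) + card (?N k2)"
    by (intro card_Un_disjoint finite_imageI) (auto intro: finite_subset[of _ "{1..int _}"])
  ultimately have "card {x \<in> mult_range k1 k2. \<not> int p dvd x} = card (uminus ` ?N k1) + card (?N k2)"
    by (simp only:)
  then show ?thesis
    by (simp only: card_image[OF inj_uminus] card_int_non_multiples_atLeastAtMost)
qed

lemma perfect_splitter_set_card:
  assumes "perfect_splitter_set k1 k2 q B" "0 < k1 + k2" "0 < q"
  shows "card B * (k1 + k2) = q - 1"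
proof -
  have "real (card B) * real (k1 + k2) = real q - 1"
    using assms(1,2) unfolding perfect_splitter_set_def by (simp add: field_simps)
  then have "real (card B * (k1 + k2)) = real (q - 1)"
    using assms(3) by (simp add: of_nat_diff)
  then show ?thesis by (simp only: of_nat_eq_iff)
qed

lemma diff_div_eq_cofactor_mult:
  fixes a c k t :: nat
  assumes "a * k + 1 = (a * c + 1) * t" "0 < a"
  shows "k - k div (a * c + 1) = c * t"
proof -
  have sum: "a * k + 1 = a * (c * t) + t" using assms(1) by (simp add: algebra_simps)
  then have "0 < t" by (cases t) auto
  with sum have "a * (c * t) \<le> a * k" by linarith
  then have "c * t \<le> k" using assms(2) by simp
  define s where "s = k - c * t"
  have k: "k = c * t + s" using \<open>c * t \<le> k\<close> s_def by simp
  have t: "t = a * s + 1" using sum unfolding k by (simp add: algebra_simps)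
  have "k = s * (a * c + 1) + c" unfolding k t by (simp add: algebra_simps)
  moreover have "(s * (a * c + 1) + c) div (a * c + 1) = s + c div (a * c + 1)"
    by (rule div_mult_self3) simp
  moreover have "c < a * c + 1" using assms(2) by (simp add: le_imp_less_Suc)
  ultimately have "k div (a * c + 1) = s" by simp
  then show ?thesis using k by simp
qed

lemma perfect_splitter_set_bij:
  assumes perfect: "perfect_splitter_set k1 k2 q B" and "0 < k1 + k2" "0 < q"
  shows "bij_betw (\<lambda>(x, b). (x * b) mod int q) (mult_range k1 k2 \<times> B) {1..<int q}"
proof -
  let ?f = "\<lambda>(x, b). (x * b) mod int q"
  let ?R = "mult_range k1 k2"
  let ?row = "splitter_row k1 k2 q"
  have B: "splitter_set k1 k2 q B" using perfect unfolding perfect_splitter_set_def by simp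
  then have row_card: "card (?row b) = k1 + k2" and row_nonzero: "0 \<notin> ?row b" if "b \<in> B" for b
    using that unfolding splitter_set_def by blast+
  have rows_disjoint: "?row b \<inter> ?row b' = {}" if "b \<in> B" "b' \<in> B" "b \<noteq> b'" for b b'
    using B that unfolding splitter_set_def by blast
  have row: "?row b = (\<lambda>x. (x * b) mod int q) ` ?R" for b
    unfolding splitter_row_def ..
  have finR: "finite ?R" unfolding mult_range_def by simp
  have row_inj: "inj_on (\<lambda>x. (x * b) mod int q) ?R" if "b \<in> B" for b
    using row_card[OF that] unfolding row card_mult_range[symmetric] by (rule eq_card_imp_inj_on[OF finR])
  have inj: "inj_on ?f (?R \<times> B)"
  proof (rule inj_onI, clarify)
    fix x b x' b'
    assume x: "x \<in> ?R" "x' \<in> ?R" and b: "b \<in> B" "b' \<in> B"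
      and eq: "(x * b) mod int q = (x' * b') mod int q"
    have "(x * b) mod int q \<in> ?row b \<inter> ?row b'"
      using x eq unfolding row by (metis IntI image_eqI)
    then have "b = b'" using rows_disjoint[OF b] by blast
    with eq have "(x * b) mod int q = (x' * b) mod int q" by simp
    then have "x = x'" by (rule inj_onD[OF row_inj[OF b(1)] _ x])
    with \<open>b = b'\<close> show "x = x' \<and> b = b'" by simp
  qed
  have sub: "?f ` (?R \<times> B) \<subseteq> {1..<int q}"
  proof clarify
    fix x b assume "x \<in> ?R" "b \<in> B"
    then have "(x * b) mod int q \<noteq> 0" using row_nonzero unfolding row by (metis image_eqI)
    moreover have "0 \<le> (x * b) mod int q" "(x * b) mod int q < int q" using \<open>0 < q\<close> by simp_all
    ultimately show "(x * b) mod int q \<in> {1..<int q}" by simp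
  qed
  have "card (?f ` (?R \<times> B)) = card ?R * card B"
    using inj by (simp only: card_image card_cartesian_product)
  also have "\<dots> = q - 1"
    using perfect_splitter_set_card[OF assms] by (simp add: card_mult_range mult.commute)
  also have "\<dots> = card {1..<int q}" by simp
  finally have "?f ` (?R \<times> B) = {1..<int q}"
    by (rule card_subset_eq[OF finite_atLeastLessThan_int sub])
  with inj show ?thesis unfolding bij_betw_def ..
qed

lemma perfect_splitter_set_card_non_multiples:
  assumes "perfect_splitter_set k1 k2 q B" and "0 < k1 + k2" "0 < q"
    and "prime p" "p dvd q"
  shows "card {x \<in> mult_range k1 k2. \<not> int p dvd x} * card {b \<in> B. \<not> int p dvd b}
    = q - q div p"
proof -
  let ?f = "\<lambda>(x, b). (x * b) mod int q"
  let ?S = "{x \<in> mult_range k1 k2. \<not> int p dvd x}"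
  let ?B' = "{b \<in> B. \<not> int p dvd b}"
  have bij: "bij_betw ?f (mult_range k1 k2 \<times> B) {1..<int q}"
    by (rule perfect_splitter_set_bij[OF assms(1-3)])
  have dvd_f: "int p dvd (x * b) mod int q \<longleftrightarrow> int p dvd x \<or> int p dvd b" for x b
    using assms(4,5) by (simp add: dvd_mod_iff prime_dvd_mult_iff)
  have "?f ` (?S \<times> ?B') = {y \<in> ?f ` (mult_range k1 k2 \<times> B). \<not> int p dvd y}"
    using dvd_f by fastforce
  also have "?f ` (mult_range k1 k2 \<times> B) = {1..<int q}"
    using bij by (rule bij_betw_imp_surj_on)
  finally have image: "?f ` (?S \<times> ?B') = {y \<in> {1..<int q}. \<not> int p dvd y}" .
  have "bij_betw ?f (?S \<times> ?B') {y \<in> {1..<int q}. \<not> int p dvd y}"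
    by (rule bij_betw_subset[OF bij _ image]) auto
  then have "card (?S \<times> ?B') = card {y \<in> {1..<int q}. \<not> int p dvd y}"
    by (rule bij_betw_same_card)
  then have "card ?S * card ?B' = card {y \<in> {1..<int q}. \<not> int p dvd y}"
    by (simp only: card_cartesian_product)
  also have "{y \<in> {1..<int q}. \<not> int p dvd y} = {y \<in> {1..int q}. \<not> int p dvd y}"
    using \<open>p dvd q\<close> by (auto simp: order_le_less)
  finally show ?thesis by (simp only: card_int_non_multiples_atLeastAtMost)
qed

lemma mult_add_one_dvd_of_count:
  fixes a k p n x :: nat
  assumes count: "(k - k div p) * x = (p - 1) * n"
    and "p dvd a * k + 1" "a dvd p - 1" "1 < p" "0 < a"
  shows "a * k + 1 dvd p * n"
proof -
  obtain c where c: "p - 1 = a * c" using \<open>a dvd p - 1\<close> ..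
  with \<open>1 < p\<close> have p: "p = a * c + 1" and "0 < c" by (simp, metis gr0I mult_0_right zero_less_diff)
  obtain t where t: "a * k + 1 = p * t" using \<open>p dvd a * k + 1\<close> ..
  have "k - k div p = c * t"
    using t \<open>0 < a\<close> unfolding p by (rule diff_div_eq_cofactor_mult)
  with count have "c * (t * x) = c * (a * n)"
    unfolding c by (simp only: ac_simps)
  with \<open>0 < c\<close> have "t dvd a * n" by (metis dvd_triv_left mult_left_cancel not_less0)
  moreover have "coprime (p * t) a"
    unfolding t[symmetric] by (metis coprime_mult_right_iff coprime_add_one_left)
  ultimately have "p * t dvd p * n" by (simp add: coprime_dvd_mult_right_iff)
  then show ?thesis unfolding t .
qed

theorem corollary3p5:
  fixes k1 k2 m p a :: nat
  assumes "0 < k1" "k1 \<le> k2" "k1 + k2 \<ge> 4"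
    and "0 < m"
    and "\<exists>B. perfect_splitter_set k1 k2 m B"
    and "prime p" and "0 < a" and "p dvd m" and "a dvd p - 1"
    and "p dvd a * (k1 + k2) + 1"
    and "k1 div p + k2 div p = (k1 + k2) div p"
  shows "a * (k1 + k2) + 1 dvd m"
proof -
  obtain B where B: "perfect_splitter_set k1 k2 m B" using assms(5) ..
  obtain n where n: "m = p * n" using \<open>p dvd m\<close> ..
  let ?S = "{x \<in> mult_range k1 k2. \<not> int p dvd x}"
  let ?B' = "{b \<in> B. \<not> int p dvd b}"
  have "card ?S = (k1 + k2) - (k1 + k2) div p"
    using card_mult_range_non_multiples[of k1 k2 p] \<open>k1 div p + k2 div p = (k1 + k2) div p\<close>
      div_le_dividend[of k1 p] div_le_dividend[of k2 p]
    by linarith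
  moreover have "card ?S * card ?B' = (p - 1) * n"
    using perfect_splitter_set_card_non_multiples[OF B _ \<open>0 < m\<close> \<open>prime p\<close> \<open>p dvd m\<close>]
      \<open>0 < k1\<close> n prime_gt_0_nat[OF \<open>prime p\<close>]
    by (simp add: diff_mult_distrib)
  ultimately have "((k1 + k2) - (k1 + k2) div p) * card ?B' = (p - 1) * n" by simp
  from this \<open>p dvd a * (k1 + k2) + 1\<close> \<open>a dvd p - 1\<close> prime_gt_1_nat[OF \<open>prime p\<close>] \<open>0 < a\<close>
  have "a * (k1 + k2) + 1 dvd p * n"
    by (rule mult_add_one_dvd_of_count)
  then show ?thesis unfolding n .
qed

end
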